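(* Let $\mathcal{D}=(\gamma,s_0,(E_i)_{i\in N})$ be a PPD, $i\in N$, $\omega$ an $\mathrm{LTL}_f$ formula, $s$ a state, $\pi_1$ a joint $k$-plan for $N$ and $\pi$ an individual $k$-plan for $i$. Then: (1) if $i$ bears AAR for $\omega$ in $(\pi_1,s)$ then $i$ bears CAR for $\omega$ in $(\pi_1,s)$; (2) if $i$ bears CAR for $\omega$ in $(\pi_1,s)$ then $i$ bears CCR for $\omega$ in $(\pi_1,s)$; (3) if $i$ bears CPR for $\omega$ in $(\pi_1,s)$ then $i$ bears CCR for $\omega$ in $(\pi_1,s)$; (4) for each $X\in\{\mathrm{CAR},\mathrm{CPR},\mathrm{CCR},\mathrm{AAR}\}$, if $s\in E_i$ and $i$ bears $X$ for $\omega$ in $(\pi_1,s)$, then $i$ anticipates $X$ for $\omega$ in $\pi_1^{\{i\}}$; (5) if $i$ anticipates AAR for $\omega$ in $\pi$ then $i$ anticipates CAR; if $i$ anticipates CAR then $i$ anticipates CCR; if $i$ anticipates CPR then $i$ anticipates CCR (all for $\omega$ in $\pi$); (6) $i$ anticipates CCR for $\omega$ in $\pi$ if and only if $i$ anticipates CPR for $\omega$ in $\pi$.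
   Context: Let $N$ be a finite set of agents, $P$ a finite set of propositional atoms, $S=2^P$ the set of states, and $A$ a finite nonempty set of action names containing a distinguished action $\mathit{skip}$. The language $\mathcal{L}_{PL+}$ is generated by $\phi ::= p \mid do(i,a) \mid \neg\phi \mid \phi\wedge\phi$ ($p\in P$, $i\in N$, $a\in A$). A $k$-history is a pair $H=(H_{st},H_{act})$ with $H_{st}:\{0,\dots,k\}\to S$ and $H_{act}:N\times\{0,\dots,k-1\}\to A$; $H,t\models p$ iff $p\in H_{st}(t)$, $H,t\models do(i,a)$ iff $t<k$ and $H_{act}(i,t)=a$, Boolean connectives as usual. An action theory is a pair $\gamma=(\gamma^+,\gamma^-)$ of functions $N\times A\times P\to\mathcal{L}_{PL+}$ with $\gamma^{+}(i,\mathit{skip},p)=\gamma^{-}(i,\mathit{skip},p)=\bot$. A $k$-history $H$ is $\gamma$-compatible if for every $t<k$, $H_{st}(t+1)=(H_{st}(t)\setminus D_t)\cup U_t$, where $D_t$ is the set of $p$ with $H,t\models\gamma^-(i,H_{act}(i,t),p)$ for some $i$ and $H,t\models\neg\gamma^+(j,H_{act}(j,t),p)$ for all $j$, and $U_t$ is the set of $p$ with $H,t\models\gamma^+(i,H_{act}(i,t),p)$ for some $i$ and $H,t\models\neg\gamma^-(j,H_{act}(j,t),p)$ for all $j$. A joint $k$-plan for a coalition $J\subseteq N$ is a function $\pi$ assigning to each $i\in J$ a sequence $\pi(i):\{0,\dots,k-1\}\to A$ (an individual plan if $J=\{i\}$). For $J'\subseteq J$, $\pi^{J'}$ is the restriction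 of $\pi$ to $J'$ and $\pi^{-J'}=\pi^{J\setminus J'}$. A joint $k$-plan $\pi_2$ for $N$ is compatible with a $k$-plan $\pi_1$ for $J$ if $\pi_2^J=\pi_1$ (every joint $k$-plan for $N$ is compatible with the plan of the empty coalition). For a state $s$, $H^{\pi,s,\gamma}$ is the unique $\gamma$-compatible $k$-history with $H_{st}(0)=s$ and $H_{act}(i,t)=\pi(i)(t)$. $\mathrm{LTL}_f$ formulas: $\phi::=p\mid do(i,a)\mid\neg\phi\mid\phi\wedge\phi\mid X\phi\mid\phi\,U\,\phi$, with $H,t\models X\phi$ iff $t<k$ and $H,t+1\models\phi$, and $H,t\models\phi_1U\phi_2$ iff there is $t'$ with $t\le t'\le k$, $H,t'\models\phi_2$ and $H,t''\models\phi_1$ for all $t\le t''<t'$; $F\phi:=\top U\phi$, $G\phi:=\neg F\neg\phi$; $H\models\phi$ means $H,0\models\phi$. A PPD (partial information multi-agent planning domain) is $\mathcal{D}=(\gamma,s_0,(E_i)_{i\in N})$ with $\gamma$ an action theory, $s_0\in S$ the initial state, and $E_i\subseteq S$ the set of initial states agent $i$ considers possible. Throughout, a horizon $k$ is fixed and "joint plan" means joint $k$-plan for $N$. For $i\in N$, a joint plan $\pi_1$, a state $s$ and an $\mathrm{LTL}_f$ formula $\omega$: - $i$ bears Causal Active Responsibility (CAR) for $\omega$ in $(\pi_1,s)$ if $H^{\pi_2,s,\gamma}\models\omega$ for every joint plan $\pi_2$ compatible with $\pi_1^{\{i\}}$, and there is a joint plan $\pi_3$ with $H^{\pi_3,s,\gamma}\not\models\omega$;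 - $i$ bears Causal Passive Responsibility (CPR) for $\omega$ in $(\pi_1,s)$ if $H^{\pi_1,s,\gamma}\models\omega$ and there is a joint plan $\pi_2$ compatible with $\pi_1^{-\{i\}}$ with $H^{\pi_2,s,\gamma}\not\models\omega$; - $i$ bears Causal Contributive Responsibility (CCR) for $\omega$ in $(\pi_1,s)$ if $H^{\pi_1,s,\gamma}\models\omega$ and there is a coalition $J\subseteq N$ with $i\in J$ such that $H^{\pi_2,s,\gamma}\models\omega$ for every joint plan $\pi_2$ compatible with $\pi_1^J$, and there is a joint plan $\pi_3$ compatible with $\pi_1^{J\setminus\{i\}}$ with $H^{\pi_3,s,\gamma}\not\models\omega$; - $i$ bears Agentive Active Responsibility (AAR) for $\omega$ in $(\pi_1,s)$ if $i$ bears CAR for $\omega$ in $(\pi_1,s)$ and $H^{\pi_2,s',\gamma}\models\omega$ for every joint plan $\pi_2$ compatible with $\pi_1^{\{i\}}$ and every $s'\in E_i$. For an individual $k$-plan $\pi$ of $i$ and $X\in\{\mathrm{CAR},\mathrm{CPR},\mathrm{CCR},\mathrm{AAR}\}$, $i$ anticipates $X$ for $\omega$ in $\pi$ if there exist $s_1\in E_i$ and a joint plan $\pi_1$ compatible with $\pi$ such that $i$ bears $X$ for $\omega$ in $(\pi_1,s_1)$. *)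

theory Defs
  imports Main
begin

text \<open>Agents: finite type 'n (N = UNIV); atoms: finite type 'p (P = UNIV);
  actions: finite type 'a (A = UNIV, nonempty), with a distinguished action skip.  Plans are functions into actions; only the values
  at times t < k are relevant.\<close>

datatype ('n, 'a, 'p) plf =
    PAtom 'p | PDo 'n 'a | PNot "('n, 'a, 'p) plf" | PAnd "('n, 'a, 'p) plf" "('n, 'a, 'p) plf"

datatype ('n, 'a, 'p) ltlf =
    Atom 'p | Do 'n 'a | Not "('n, 'a, 'p) ltlf" | And "('n, 'a, 'p) ltlf" "('n, 'a, 'p) ltlf"
  | Next "('n, 'a, 'p) ltlf" | Until "('n, 'a, 'p) ltlf" "('n, 'a, 'p) ltlf"

type_synonym ('n, 'a, 'p) history = "(nat \<Rightarrow> 'p set) \<times> ('n \<Rightarrow> nat \<Rightarrow> 'a)"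

fun pl_sat :: "nat \<Rightarrow> ('n, 'a, 'p) history \<Rightarrow> nat \<Rightarrow> ('n, 'a, 'p) plf \<Rightarrow> bool" where
  "pl_sat k H t (PAtom p) = (p \<in> fst H t)"
| "pl_sat k H t (PDo i a) = (t < k \<and> snd H i t = a)"
| "pl_sat k H t (PNot \<phi>) = (\<not> pl_sat k H t \<phi>)"
| "pl_sat k H t (PAnd \<phi> \<psi>) = (pl_sat k H t \<phi> \<and> pl_sat k H t \<psi>)"

fun ltl_sat :: "nat \<Rightarrow> ('n, 'a, 'p) history \<Rightarrow> nat \<Rightarrow> ('n, 'a, 'p) ltlf \<Rightarrow> bool" where
  "ltl_sat k H t (Atom p) = (p \<in> fst H t)"
| "ltl_sat k H t (Do i a) = (t < k \<and> snd H i t = a)"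
| "ltl_sat k H t (Not \<phi>) = (\<not> ltl_sat k H t \<phi>)"
| "ltl_sat k H t (And \<phi> \<psi>) = (ltl_sat k H t \<phi> \<and> ltl_sat k H t \<psi>)"
| "ltl_sat k H t (Next \<phi>) = (t < k \<and> ltl_sat k H (Suc t) \<phi>)"
| "ltl_sat k H t (Until \<phi> \<psi>) =
     (\<exists>t'. t \<le> t' \<and> t' \<le> k \<and> ltl_sat k H t' \<psi> \<and> (\<forall>t''. t \<le> t'' \<and> t'' < t' \<longrightarrow> ltl_sat k H t'' \<phi>))"

type_synonym ('n, 'a, 'p) action_theory =
  "('n \<Rightarrow> 'a \<Rightarrow> 'p \<Rightarrow> ('n, 'a, 'p) plf) \<times> ('n \<Rightarrow> 'a \<Rightarrow> 'p \<Rightarrow> ('n, 'a, 'p) plf)"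

text \<open>Action theory condition: gamma+(i,skip,p) and gamma-(i,skip,p) are bottom
  (read as: equivalent to bottom, i.e. false in every history at every time).\<close>
definition action_theory :: "'a \<Rightarrow> ('n, 'a, 'p) action_theory \<Rightarrow> bool" where
  "action_theory skip \<gamma> \<longleftrightarrow>
     (\<forall>i p k H t. \<not> pl_sat k H t (fst \<gamma> i skip p) \<and> \<not> pl_sat k H t (snd \<gamma> i skip p))"

definition del_set :: "nat \<Rightarrow> ('n, 'a, 'p) action_theory \<Rightarrow> ('n, 'a, 'p) history \<Rightarrow> nat \<Rightarrow> 'p set" where
  "del_set k \<gamma> H t = {p. (\<exists>i. pl_sat k H t (snd \<gamma> i (snd H i t) p))
                       \<and> (\<forall>j. \<not> pl_sat k H t (fst \<gamma> j (snd H j t) p))}"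

definition add_set :: "nat \<Rightarrow> ('n, 'a, 'p) action_theory \<Rightarrow> ('n, 'a, 'p) history \<Rightarrow> nat \<Rightarrow> 'p set" where
  "add_set k \<gamma> H t = {p. (\<exists>i. pl_sat k H t (fst \<gamma> i (snd H i t) p))
                       \<and> (\<forall>j. \<not> pl_sat k H t (snd \<gamma> j (snd H j t) p))}"

definition gamma_compatible :: "nat \<Rightarrow> ('n, 'a, 'p) action_theory \<Rightarrow> ('n, 'a, 'p) history \<Rightarrow> bool" where
  "gamma_compatible k \<gamma> H \<longleftrightarrow>
     (\<forall>t<k. fst H (Suc t) = (fst H t - del_set k \<gamma> H t) \<union> add_set k \<gamma> H t)"

text \<open>The state sequence of H^{pi,s,gamma} (PL+ formulas at time t only read the
  state at time t and the actions at time t, so this is well-defined by recursion).\<close>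
primrec hist_st :: "nat \<Rightarrow> ('n, 'a, 'p) action_theory \<Rightarrow> ('n \<Rightarrow> nat \<Rightarrow> 'a) \<Rightarrow> 'p set \<Rightarrow> nat \<Rightarrow> 'p set" where
  "hist_st k \<gamma> \<pi> s 0 = s"
| "hist_st k \<gamma> \<pi> s (Suc t) =
     (hist_st k \<gamma> \<pi> s t - del_set k \<gamma> (\<lambda>_. hist_st k \<gamma> \<pi> s t, \<pi>) t)
       \<union> add_set k \<gamma> (\<lambda>_. hist_st k \<gamma> \<pi> s t, \<pi>) t"

definition hist :: "nat \<Rightarrow> ('n, 'a, 'p) action_theory \<Rightarrow> ('n \<Rightarrow> nat \<Rightarrow> 'a) \<Rightarrow> 'p set \<Rightarrow> ('n, 'a, 'p) history" where
  "hist k \<gamma> \<pi> s = (hist_st k \<gamma> \<pi> s, \<pi>)"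

definition models :: "nat \<Rightarrow> ('n, 'a, 'p) action_theory \<Rightarrow> ('n \<Rightarrow> nat \<Rightarrow> 'a) \<Rightarrow> 'p set \<Rightarrow> ('n, 'a, 'p) ltlf \<Rightarrow> bool" where
  "models k \<gamma> \<pi> s \<omega> \<longleftrightarrow> ltl_sat k (hist k \<gamma> \<pi> s) 0 \<omega>"

definition compat :: "nat \<Rightarrow> 'n set \<Rightarrow> ('n \<Rightarrow> nat \<Rightarrow> 'a) \<Rightarrow> ('n \<Rightarrow> nat \<Rightarrow> 'a) \<Rightarrow> bool" where
  "compat k J \<pi>1 \<pi>2 \<longleftrightarrow> (\<forall>j\<in>J. \<forall>t<k. \<pi>2 j t = \<pi>1 j t)"

definition CAR :: "nat \<Rightarrow> ('n, 'a, 'p) action_theory \<Rightarrow> 'n \<Rightarrow> ('n, 'a, 'p) ltlf \<Rightarrow> ('n \<Rightarrow> nat \<Rightarrow> 'a) \<Rightarrow> 'p set \<Rightarrow> bool" where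
  "CAR k \<gamma> i \<omega> \<pi>1 s \<longleftrightarrow>
     (\<forall>\<pi>2. compat k {i} \<pi>1 \<pi>2 \<longrightarrow> models k \<gamma> \<pi>2 s \<omega>) \<and> (\<exists>\<pi>3. \<not> models k \<gamma> \<pi>3 s \<omega>)"

definition CPR :: "nat \<Rightarrow> ('n, 'a, 'p) action_theory \<Rightarrow> 'n \<Rightarrow> ('n, 'a, 'p) ltlf \<Rightarrow> ('n \<Rightarrow> nat \<Rightarrow> 'a) \<Rightarrow> 'p set \<Rightarrow> bool" where
  "CPR k \<gamma> i \<omega> \<pi>1 s \<longleftrightarrow>
     models k \<gamma> \<pi>1 s \<omega> \<and> (\<exists>\<pi>2. compat k (UNIV - {i}) \<pi>1 \<pi>2 \<and> \<not> models k \<gamma> \<pi>2 s \<omega>)"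

definition CCR :: "nat \<Rightarrow> ('n, 'a, 'p) action_theory \<Rightarrow> 'n \<Rightarrow> ('n, 'a, 'p) ltlf \<Rightarrow> ('n \<Rightarrow> nat \<Rightarrow> 'a) \<Rightarrow> 'p set \<Rightarrow> bool" where
  "CCR k \<gamma> i \<omega> \<pi>1 s \<longleftrightarrow>
     models k \<gamma> \<pi>1 s \<omega> \<and>
     (\<exists>J. i \<in> J \<and> (\<forall>\<pi>2. compat k J \<pi>1 \<pi>2 \<longrightarrow> models k \<gamma> \<pi>2 s \<omega>)
          \<and> (\<exists>\<pi>3. compat k (J - {i}) \<pi>1 \<pi>3 \<and> \<not> models k \<gamma> \<pi>3 s \<omega>))"

definition AAR :: "nat \<Rightarrow> ('n, 'a, 'p) action_theory \<Rightarrow> ('n \<Rightarrow> 'p set set) \<Rightarrow> 'n \<Rightarrow> ('n, 'a, 'p) ltlf \<Rightarrow> ('n \<Rightarrow> nat \<Rightarrow> 'a) \<Rightarrow> 'p set \<Rightarrow> bool" where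
  "AAR k \<gamma> E i \<omega> \<pi>1 s \<longleftrightarrow>
     CAR k \<gamma> i \<omega> \<pi>1 s \<and>
     (\<forall>\<pi>2. compat k {i} \<pi>1 \<pi>2 \<longrightarrow> (\<forall>s'\<in>E i. models k \<gamma> \<pi>2 s' \<omega>))"

datatype resp = RCAR | RCPR | RCCR | RAAR

definition bears :: "resp \<Rightarrow> nat \<Rightarrow> ('n, 'a, 'p) action_theory \<Rightarrow> ('n \<Rightarrow> 'p set set) \<Rightarrow> 'n \<Rightarrow> ('n, 'a, 'p) ltlf \<Rightarrow> ('n \<Rightarrow> nat \<Rightarrow> 'a) \<Rightarrow> 'p set \<Rightarrow> bool" where
  "bears X k \<gamma> E i \<omega> \<pi>1 s =
     (case X of RCAR \<Rightarrow> CAR k \<gamma> i \<omega> \<pi>1 s | RCPR \<Rightarrow> CPR k \<gamma> i \<omega> \<pi>1 s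
              | RCCR \<Rightarrow> CCR k \<gamma> i \<omega> \<pi>1 s | RAAR \<Rightarrow> AAR k \<gamma> E i \<omega> \<pi>1 s)"

definition anticipates :: "resp \<Rightarrow> nat \<Rightarrow> ('n, 'a, 'p) action_theory \<Rightarrow> ('n \<Rightarrow> 'p set set) \<Rightarrow> 'n \<Rightarrow> ('n, 'a, 'p) ltlf \<Rightarrow> (nat \<Rightarrow> 'a) \<Rightarrow> bool" where
  "anticipates X k \<gamma> E i \<omega> \<pi> \<longleftrightarrow>
     (\<exists>s1\<in>E i. \<exists>\<pi>1. (\<forall>t<k. \<pi>1 i t = \<pi> t) \<and> bears X k \<gamma> E i \<omega> \<pi>1 s1)"

end

theory Submission
  imports Defs
begin

text \<open>Parts (1)-(5) are immediate from the definitions: CAR yields CCR with the coalition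
  \<open>{i}\<close>, CPR yields CCR with the grand coalition, and anticipation is monotone in the
  responsibility notion. For (6), take a witness \<open>(\<pi>\<^sub>1, s\<^sub>1, J, \<pi>\<^sub>3)\<close> of anticipated CCR and
  let \<open>\<pi>'\<close> be \<open>\<pi>\<^sub>3\<close> with agent \<open>i\<close> playing \<open>\<pi>\<close>. Then \<open>\<pi>'\<close> agrees with \<open>\<pi>\<^sub>1\<close> on \<open>J\<close>, so it
  satisfies \<open>\<omega>\<close>, while \<open>\<pi>\<^sub>3\<close> differs from it only in the actions of \<open>i\<close> and violates \<open>\<omega>\<close>:
  \<open>i\<close> bears CPR in \<open>(\<pi>', s\<^sub>1)\<close>. No property of the action theory is needed.\<close>

lemma pl_sat_cong:
  assumes "fst H t = fst H' t" and "\<And>j. t < k \<Longrightarrow> snd H j t = snd H' j t"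
  shows "pl_sat k H t \<phi> = pl_sat k H' t \<phi>"
  using assms by (induction \<phi>) auto

lemma ltl_sat_cong:
  assumes "\<And>t'. t' \<le> k \<Longrightarrow> fst H t' = fst H' t'"
    and "\<And>j t'. t' < k \<Longrightarrow> snd H j t' = snd H' j t'"
    and "t \<le> k"
  shows "ltl_sat k H t \<phi> = ltl_sat k H' t \<phi>"
  using assms(3)
proof (induction \<phi> arbitrary: t)
  case (Until \<phi>\<^sub>1 \<phi>\<^sub>2)
  have "\<And>u. u \<le> k \<Longrightarrow> ltl_sat k H u \<phi>\<^sub>1 = ltl_sat k H' u \<phi>\<^sub>1"
    and "\<And>u. u \<le> k \<Longrightarrow> ltl_sat k H u \<phi>\<^sub>2 = ltl_sat k H' u \<phi>\<^sub>2"
    by (fact Until.IH)+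
  then show ?case by (simp cong: conj_cong)
qed (use assms in auto)

lemma hist_st_cong:
  assumes "\<And>j t'. t' < k \<Longrightarrow> \<pi> j t' = \<pi>' j t'" and "t \<le> k"
  shows "hist_st k \<gamma> \<pi> s t = hist_st k \<gamma> \<pi>' s t"
  using assms(2)
proof (induction t)
  case (Suc t)
  then have "t < k" and IH: "hist_st k \<gamma> \<pi> s t = hist_st k \<gamma> \<pi>' s t" by auto
  then have same_acts: "\<pi> j t = \<pi>' j t" for j
    using assms(1) by blast
  have same_sat: "pl_sat k (\<lambda>_. hist_st k \<gamma> \<pi> s t, \<pi>) t \<phi>
                = pl_sat k (\<lambda>_. hist_st k \<gamma> \<pi>' s t, \<pi>') t \<phi>" for \<phi>
    by (rule pl_sat_cong) (use IH same_acts in auto)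
  have "del_set k \<gamma> (\<lambda>_. hist_st k \<gamma> \<pi> s t, \<pi>) t = del_set k \<gamma> (\<lambda>_. hist_st k \<gamma> \<pi>' s t, \<pi>') t"
    and "add_set k \<gamma> (\<lambda>_. hist_st k \<gamma> \<pi> s t, \<pi>) t = add_set k \<gamma> (\<lambda>_. hist_st k \<gamma> \<pi>' s t, \<pi>') t"
    unfolding del_set_def add_set_def using same_sat same_acts by simp_all
  then show ?case by (simp only: hist_st.simps IH)
qed simp

text \<open>Plans are total functions, but only their values before the horizon matter.\<close>

lemma models_cong:
  assumes "compat k UNIV \<pi> \<pi>'"
  shows "models k \<gamma> \<pi>' s \<omega> = models k \<gamma> \<pi> s \<omega>"
proof -
  have same_acts: "\<And>j t. t < k \<Longrightarrow> \<pi> j t = \<pi>' j t"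
    using assms unfolding compat_def by auto
  have same_states: "hist_st k \<gamma> \<pi>' s t = hist_st k \<gamma> \<pi> s t" if "t \<le> k" for t
    using hist_st_cong[OF same_acts that] by (rule sym)
  show ?thesis unfolding models_def hist_def
    by (rule ltl_sat_cong) (simp_all add: same_states same_acts)
qed

lemma AAR_imp_CAR: "AAR k \<gamma> E i \<omega> \<pi>\<^sub>1 s \<Longrightarrow> CAR k \<gamma> i \<omega> \<pi>\<^sub>1 s"
  by (simp add: AAR_def)

lemma CAR_imp_CCR: "CAR k \<gamma> i \<omega> \<pi>\<^sub>1 s \<Longrightarrow> CCR k \<gamma> i \<omega> \<pi>\<^sub>1 s"
  unfolding CAR_def CCR_def
  by (rule conjI, force simp: compat_def, rule exI[of _ "{i}"], auto simp: compat_def)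

lemma CPR_imp_CCR: "CPR k \<gamma> i \<omega> \<pi>\<^sub>1 s \<Longrightarrow> CCR k \<gamma> i \<omega> \<pi>\<^sub>1 s"
  unfolding CPR_def CCR_def
  by (rule conjI, simp, rule exI[of _ UNIV]) (auto simp: models_cong)

lemma bears_imp_anticipates:
  "s \<in> E i \<Longrightarrow> bears X k \<gamma> E i \<omega> \<pi>\<^sub>1 s \<Longrightarrow> anticipates X k \<gamma> E i \<omega> (\<pi>\<^sub>1 i)"
  unfolding anticipates_def by blast

lemma anticipates_mono:
  assumes "anticipates X k \<gamma> E i \<omega> \<pi>"
    and "\<And>\<pi>\<^sub>1 s. bears X k \<gamma> E i \<omega> \<pi>\<^sub>1 s \<Longrightarrow> bears Y k \<gamma> E i \<omega> \<pi>\<^sub>1 s"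
  shows "anticipates Y k \<gamma> E i \<omega> \<pi>"
  using assms unfolding anticipates_def by blast

lemma anticipates_CCR_imp_CPR:
  assumes "anticipates RCCR k \<gamma> E i \<omega> \<pi>"
  shows "anticipates RCPR k \<gamma> E i \<omega> \<pi>"
proof -
  obtain s\<^sub>1 \<pi>\<^sub>1 J \<pi>\<^sub>3 where "s\<^sub>1 \<in> E i" and plays_\<pi>: "\<forall>t<k. \<pi>\<^sub>1 i t = \<pi> t"
    and J_forces: "\<forall>\<pi>\<^sub>2. compat k J \<pi>\<^sub>1 \<pi>\<^sub>2 \<longrightarrow> models k \<gamma> \<pi>\<^sub>2 s\<^sub>1 \<omega>"
    and "compat k (J - {i}) \<pi>\<^sub>1 \<pi>\<^sub>3" and violates: "\<not> models k \<gamma> \<pi>\<^sub>3 s\<^sub>1 \<omega>"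
    using assms unfolding anticipates_def bears_def CCR_def by auto
  define \<pi>' where "\<pi>' = \<pi>\<^sub>3(i := \<pi>\<^sub>1 i)"
  have "compat k J \<pi>\<^sub>1 \<pi>'"
    using \<open>compat k (J - {i}) \<pi>\<^sub>1 \<pi>\<^sub>3\<close> unfolding compat_def \<pi>'_def by auto
  with J_forces have "models k \<gamma> \<pi>' s\<^sub>1 \<omega>" by blast
  moreover have "compat k (UNIV - {i}) \<pi>' \<pi>\<^sub>3"
    unfolding compat_def \<pi>'_def by auto
  ultimately have "bears RCPR k \<gamma> E i \<omega> \<pi>' s\<^sub>1"
    unfolding bears_def resp.case CPR_def using violates by blast
  moreover have "\<forall>t<k. \<pi>' i t = \<pi> t"
    using plays_\<pi> unfolding \<pi>'_def by simp
  ultimately show ?thesis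
    unfolding anticipates_def using \<open>s\<^sub>1 \<in> E i\<close> by blast
qed

theorem theorem2:
  fixes \<gamma> :: "('n::finite, 'a::finite, 'p::finite) action_theory"
    and skip :: 'a and s0 :: "'p set" and E :: "'n \<Rightarrow> 'p set set"
    and k :: nat and i :: 'n and \<omega> :: "('n, 'a, 'p) ltlf" and s :: "'p set"
    and \<pi>1 :: "'n \<Rightarrow> nat \<Rightarrow> 'a" and \<pi> :: "nat \<Rightarrow> 'a"
  assumes "action_theory skip \<gamma>"
  shows "(AAR k \<gamma> E i \<omega> \<pi>1 s \<longrightarrow> CAR k \<gamma> i \<omega> \<pi>1 s)
       \<and> (CAR k \<gamma> i \<omega> \<pi>1 s \<longrightarrow> CCR k \<gamma> i \<omega> \<pi>1 s)
       \<and> (CPR k \<gamma> i \<omega> \<pi>1 s \<longrightarrow> CCR k \<gamma> i \<omega> \<pi>1 s)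
       \<and> (\<forall>X. s \<in> E i \<and> bears X k \<gamma> E i \<omega> \<pi>1 s \<longrightarrow> anticipates X k \<gamma> E i \<omega> (\<pi>1 i))
       \<and> (anticipates RAAR k \<gamma> E i \<omega> \<pi> \<longrightarrow> anticipates RCAR k \<gamma> E i \<omega> \<pi>)
       \<and> (anticipates RCAR k \<gamma> E i \<omega> \<pi> \<longrightarrow> anticipates RCCR k \<gamma> E i \<omega> \<pi>)
       \<and> (anticipates RCPR k \<gamma> E i \<omega> \<pi> \<longrightarrow> anticipates RCCR k \<gamma> E i \<omega> \<pi>)
       \<and> (anticipates RCCR k \<gamma> E i \<omega> \<pi> \<longleftrightarrow> anticipates RCPR k \<gamma> E i \<omega> \<pi>)"
proof -
  have "AAR k \<gamma> E i \<omega> \<pi>1 s \<longrightarrow> CAR k \<gamma> i \<omega> \<pi>1 s"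
    by (intro impI AAR_imp_CAR)
  moreover have "CAR k \<gamma> i \<omega> \<pi>1 s \<longrightarrow> CCR k \<gamma> i \<omega> \<pi>1 s"
    by (intro impI CAR_imp_CCR)
  moreover have "CPR k \<gamma> i \<omega> \<pi>1 s \<longrightarrow> CCR k \<gamma> i \<omega> \<pi>1 s"
    by (intro impI CPR_imp_CCR)
  moreover have "\<forall>X. s \<in> E i \<and> bears X k \<gamma> E i \<omega> \<pi>1 s \<longrightarrow> anticipates X k \<gamma> E i \<omega> (\<pi>1 i)"
    by (blast intro: bears_imp_anticipates)
  moreover have "anticipates RAAR k \<gamma> E i \<omega> \<pi> \<longrightarrow> anticipates RCAR k \<gamma> E i \<omega> \<pi>"
    by (intro impI, erule anticipates_mono) (simp add: bears_def AAR_imp_CAR)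
  moreover have "anticipates RCAR k \<gamma> E i \<omega> \<pi> \<longrightarrow> anticipates RCCR k \<gamma> E i \<omega> \<pi>"
    by (intro impI, erule anticipates_mono) (simp add: bears_def CAR_imp_CCR)
  moreover have CPR_CCR: "anticipates RCPR k \<gamma> E i \<omega> \<pi> \<longrightarrow> anticipates RCCR k \<gamma> E i \<omega> \<pi>"
    by (intro impI, erule anticipates_mono) (simp add: bears_def CPR_imp_CCR)
  moreover have "anticipates RCCR k \<gamma> E i \<omega> \<pi> \<longleftrightarrow> anticipates RCPR k \<gamma> E i \<omega> \<pi>"
    using CPR_CCR anticipates_CCR_imp_CPR[of k \<gamma> E i \<omega> \<pi>] by blast
  ultimately show ?thesis by (intro conjI)
qed

end
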